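(* Let $G$ be a group with a limiting sequence pair $(F_n)_n$, $(k_n)_n$, and let $(g_n)_{n\in\mathbb{N}}$ be any sequence of elements of $G$. Then there exists a sequence $(m_n)_{n\in\mathbb{N}}$ of natural numbers such that for every $l\in\mathbb{N}$ and every $x\in G$, $$g_1\big(g_2(\cdots g_{l-1}(g_lx^{m_l})^{m_{l-1}}\cdots)^{m_2}\big)^{m_1}\in F_l$$ implies $x=1_G$.
   Context: $\mathbb{N}=\{1,2,3,\dots\}$. For a subset $S$ of a group $G$ and $j\in\mathbb{N}$, let $\sqrt[j]{S}=\{g\in G\mid g^j\in S\}$. A limiting sequence pair for $G$ is a pair consisting of subsets $F_1\subseteq F_2\subseteq\cdots$ of $G$ and natural numbers $k_1,k_2,\dots$ such that for every $n\in\mathbb{N}$: (1) for every $g\in G$ there is $m\in\mathbb{N}$ with $gF_n\subseteq F_m$; (2) $\sqrt[k_n]{F_n}=\{1_G\}$; (3) $\sqrt[k_m]{F_n}\subseteq F_n$ for all $m\le n$. *)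

theory Defs
  imports "HOL-Algebra.Group"
begin

text \<open>Natural numbers in the paper are positive; sequences are modelled as
functions on nat whose values at index 0 are ignored.\<close>

definition group_root :: "('a, 'b) monoid_scheme \<Rightarrow> nat \<Rightarrow> 'a set \<Rightarrow> 'a set" where
  "group_root G j S = {g \<in> carrier G. g [^]\<^bsub>G\<^esub> j \<in> S}"

definition limiting_sequence_pair ::
  "('a, 'b) monoid_scheme \<Rightarrow> (nat \<Rightarrow> 'a set) \<Rightarrow> (nat \<Rightarrow> nat) \<Rightarrow> bool" where
  "limiting_sequence_pair G F k \<longleftrightarrow>
     (\<forall>n\<ge>1. F n \<subseteq> carrier G) \<and>
     (\<forall>n\<ge>1. F n \<subseteq> F (Suc n)) \<and>
     (\<forall>n\<ge>1. k n \<ge> 1) \<and>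
     (\<forall>n\<ge>1. \<forall>g\<in>carrier G. \<exists>m\<ge>1. (\<lambda>h. g \<otimes>\<^bsub>G\<^esub> h) ` F n \<subseteq> F m) \<and>
     (\<forall>n\<ge>1. group_root G (k n) (F n) = {\<one>\<^bsub>G\<^esub>}) \<and>
     (\<forall>n\<ge>1. \<forall>m. 1 \<le> m \<and> m \<le> n \<longrightarrow> group_root G (k m) (F n) \<subseteq> F n)"

text \<open>nested_word G g m l x = g_1 (g_2 ( ... (g_l x^{m_l})^{m_{l-1}} ... )^{m_2})^{m_1}\<close>
fun nested_apply :: "('a, 'b) monoid_scheme \<Rightarrow> (nat \<Rightarrow> 'a) \<Rightarrow> (nat \<Rightarrow> nat) \<Rightarrow> nat \<Rightarrow> 'a \<Rightarrow> 'a" where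
  "nested_apply G g m 0 y = y"
| "nested_apply G g m (Suc j) y = nested_apply G g m j (g (Suc j) \<otimes>\<^bsub>G\<^esub> y [^]\<^bsub>G\<^esub> m (Suc j))"

definition nested_word :: "('a, 'b) monoid_scheme \<Rightarrow> (nat \<Rightarrow> 'a) \<Rightarrow> (nat \<Rightarrow> nat) \<Rightarrow> nat \<Rightarrow> 'a \<Rightarrow> 'a" where
  "nested_word G g m l x = nested_apply G g m l x"

end

theory Submission
  imports Defs
begin

text \<open>Choose indices H(1) \<le> H(2) \<le> ... with n \<le> H(n) such that every translate
g_j\<inverse> F_n with j \<le> n lies in F_{H(n)}, and put m_n = k_{H^n(n)}. If the word of
length l lies in F_l, peel off the outer layers one at a time: removing g_j by
the translation property raises the level from N to H(N), and the power m_j can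
then be removed by root closure, since m_j = k_{H^j(j)} and H^j(j) \<le> H^j(l).
For the innermost layer the level reached is exactly H^l(l), so x^{m_l} \<in> F_{H^l(l)}
forces x = 1.\<close>

lemma exists_mono_witness:
  fixes P :: "nat \<Rightarrow> nat \<Rightarrow> bool"
  assumes ex: "\<And>n. \<exists>M. P n M"
    and upward: "\<And>n M M'. P n M \<Longrightarrow> M \<le> M' \<Longrightarrow> P n M'"
  shows "\<exists>H. mono H \<and> (\<forall>n. P n (H n))"
proof -
  define W where "W i = (SOME M. P i M)" for i
  have W: "P i (W i)" for i
    unfolding W_def using ex by (rule someI_ex)
  define H where "H n = Max (W ` {..n})" for n
  have "mono H"
    by (rule monoI) (auto simp: H_def intro!: Max_mono)
  moreover have "P n (H n)" for n
    using upward[OF W[of n]] by (simp add: H_def)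
  ultimately show ?thesis by blast
qed

definition translation_bound ::
  "('a, 'b) monoid_scheme \<Rightarrow> (nat \<Rightarrow> 'a set) \<Rightarrow> (nat \<Rightarrow> 'a) \<Rightarrow> (nat \<Rightarrow> nat) \<Rightarrow> bool" where
  "translation_bound G F g H \<longleftrightarrow> mono H \<and> (\<forall>n. n \<le> H n) \<and>
     (\<forall>n j. 1 \<le> j \<longrightarrow> j \<le> n \<longrightarrow> (\<lambda>h. inv\<^bsub>G\<^esub> (g j) \<otimes>\<^bsub>G\<^esub> h) ` F n \<subseteq> F (H n))"

lemma translation_bound_le_funpow:
  assumes "translation_bound G F g H"
  shows "n \<le> (H ^^ j) n"
proof (induction j)
  case (Suc j)
  also have "(H ^^ j) n \<le> (H ^^ Suc j) n"
    using assms by (simp add: translation_bound_def)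
  finally show ?case .
qed simp

lemma translation_bound_funpow_mono:
  assumes "translation_bound G F g H" and "i \<le> l"
  shows "(H ^^ j) i \<le> (H ^^ j) l"
  using assms by (simp add: translation_bound_def funpow_mono)

locale limiting_sequence_group = group G
  for G :: "('a, 'b) monoid_scheme" (structure) +
  fixes F :: "nat \<Rightarrow> 'a set" and k :: "nat \<Rightarrow> nat"
  assumes limiting: "limiting_sequence_pair G F k"
begin

lemma F_subset_Suc: "1 \<le> n \<Longrightarrow> F n \<subseteq> F (Suc n)"
  using limiting by (simp add: limiting_sequence_pair_def)

lemma k_pos: "1 \<le> n \<Longrightarrow> 1 \<le> k n"
  using limiting by (simp add: limiting_sequence_pair_def)

lemma translate_absorbed:
  "1 \<le> n \<Longrightarrow> c \<in> carrier G \<Longrightarrow> \<exists>M\<ge>1. (\<lambda>h. c \<otimes> h) ` F n \<subseteq> F M"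
  using limiting by (simp add: limiting_sequence_pair_def)

lemma root_trivial:
  assumes "1 \<le> n" "y \<in> carrier G" "y [^] k n \<in> F n"
  shows "y = \<one>"
proof -
  have "y \<in> group_root G (k n) (F n)" using assms(2,3) by (simp add: group_root_def)
  then show ?thesis using limiting assms(1) by (simp add: limiting_sequence_pair_def)
qed

lemma root_closed:
  assumes "1 \<le> a" "a \<le> b" "y \<in> carrier G" "y [^] k a \<in> F b"
  shows "y \<in> F b"
proof -
  have "y \<in> group_root G (k a) (F b)" using assms(3,4) by (simp add: group_root_def)
  moreover have "group_root G (k a) (F b) \<subseteq> F b"
    using limiting assms(1,2) by (simp add: limiting_sequence_pair_def)
  ultimately show ?thesis by blast
qed

lemma F_mono:
  assumes "1 \<le> a" "a \<le> b"
  shows "F a \<subseteq> F b"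
  using assms(2,1)
proof (induction b rule: dec_induct)
  case (step n)
  then show ?case using F_subset_Suc[of n] by simp
qed simp

lemma finite_translates_absorbed:
  assumes "finite S" "S \<subseteq> carrier G" "1 \<le> n"
  shows "\<exists>M\<ge>n. \<forall>c\<in>S. (\<lambda>h. c \<otimes> h) ` F n \<subseteq> F M"
  using assms(1,2)
proof (induction S rule: finite_induct)
  case (insert c S)
  then obtain M where M: "n \<le> M" "\<forall>c\<in>S. (\<lambda>h. c \<otimes> h) ` F n \<subseteq> F M"
    by auto
  obtain M' where M': "1 \<le> M'" "(\<lambda>h. c \<otimes> h) ` F n \<subseteq> F M'"
    using translate_absorbed[OF assms(3)] insert.prems by blast
  have FM: "F M \<subseteq> F (max M M')" and FM': "F M' \<subseteq> F (max M M')"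
    using F_mono[of M "max M M'"] F_mono[of M' "max M M'"] M(1) M'(1) assms(3) by auto
  show ?case
  proof (intro exI[of _ "max M M'"] conjI ballI)
    fix d assume "d \<in> insert c S"
    then show "(\<lambda>h. d \<otimes> h) ` F n \<subseteq> F (max M M')"
      using order_trans[OF M'(2) FM'] order_trans[OF M(2)[rule_format] FM] by blast
  qed (use M(1) in simp)
qed auto

lemma exists_translation_bound:
  assumes g: "\<forall>n\<ge>1. g n \<in> carrier G"
  shows "\<exists>H. translation_bound G F g H"
proof -
  define P where "P n M \<longleftrightarrow> n \<le> M \<and>
    (\<forall>j. 1 \<le> j \<longrightarrow> j \<le> n \<longrightarrow> (\<lambda>h. inv (g j) \<otimes> h) ` F n \<subseteq> F M)" for n M
  have "\<exists>M. P n M" for n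
  proof (cases "n = 0")
    case False
    have "(\<lambda>j. inv (g j)) ` {1..n} \<subseteq> carrier G" using g by auto
    with False obtain M where
      "n \<le> M" "\<forall>c\<in>(\<lambda>j. inv (g j)) ` {1..n}. (\<lambda>h. c \<otimes> h) ` F n \<subseteq> F M"
      using finite_translates_absorbed[of "(\<lambda>j. inv (g j)) ` {1..n}" n] by auto
    then show ?thesis unfolding P_def by (intro exI[of _ M]) auto
  qed (auto simp: P_def)
  moreover have "P n M'" if "P n M" "M \<le> M'" for n M M'
    using that F_mono unfolding P_def by (meson dual_order.trans le_trans)
  ultimately obtain H where "mono H" "\<forall>n. P n (H n)"
    using exists_mono_witness[of P] by blast
  then have "translation_bound G F g H" by (simp add: translation_bound_def P_def)
  then show ?thesis by blast
qed

lemma translation_bound_peel: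
  assumes "translation_bound G F g H" "1 \<le> j" "j \<le> N"
    and "g j \<in> carrier G" "w \<in> carrier G" "g j \<otimes> w \<in> F N"
  shows "w \<in> F (H N)"
proof -
  have "(\<lambda>h. inv (g j) \<otimes> h) ` F N \<subseteq> F (H N)"
    using assms(1-3) by (simp add: translation_bound_def)
  then have "inv (g j) \<otimes> (g j \<otimes> w) \<in> F (H N)"
    using assms(6) by blast
  then show ?thesis using assms(4,5) by (simp add: m_assoc[symmetric])
qed

lemma nested_apply_level:
  assumes H: "translation_bound G F g H" and g: "\<forall>n\<ge>1. g n \<in> carrier G"
    and "j \<le> l" "w \<in> carrier G"
    and "nested_apply G g (\<lambda>n. k ((H ^^ n) n)) j w \<in> F l"
  shows "w \<in> F ((H ^^ j) l)"
  using assms(3-)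
proof (induction j arbitrary: w)
  case (Suc j)
  let ?m = "k ((H ^^ Suc j) (Suc j))"
  have z: "g (Suc j) \<otimes> w [^] ?m \<in> carrier G"
    using Suc.prems(2) g by simp
  have "nested_apply G g (\<lambda>n. k ((H ^^ n) n)) j (g (Suc j) \<otimes> w [^] ?m) \<in> F l"
    using Suc.prems(3) by simp
  then have "g (Suc j) \<otimes> w [^] ?m \<in> F ((H ^^ j) l)"
    using Suc.IH[OF _ z] Suc.prems(1) by simp
  moreover have "Suc j \<le> (H ^^ j) l"
    using translation_bound_le_funpow[OF H, of l j] Suc.prems(1) by linarith
  ultimately have "w [^] ?m \<in> F ((H ^^ Suc j) l)"
    using translation_bound_peel[OF H, of "Suc j" "(H ^^ j) l" "w [^] ?m"] Suc.prems(2) g by simp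
  moreover have "1 \<le> (H ^^ Suc j) (Suc j)" "(H ^^ Suc j) (Suc j) \<le> (H ^^ Suc j) l"
    using translation_bound_le_funpow[OF H, of "Suc j" "Suc j"]
      translation_bound_funpow_mono[OF H Suc.prems(1), of "Suc j"] by simp_all
  ultimately show ?case
    using root_closed Suc.prems(2) by blast
qed simp

end

theorem lemma2p2:
  fixes G :: "('a, 'b) monoid_scheme" and F :: "nat \<Rightarrow> 'a set" and k :: "nat \<Rightarrow> nat"
    and g :: "nat \<Rightarrow> 'a"
  assumes "group G"
    and "limiting_sequence_pair G F k"
    and "\<forall>n\<ge>1. g n \<in> carrier G"
  shows "\<exists>m :: nat \<Rightarrow> nat. (\<forall>n\<ge>1. m n \<ge> 1) \<and>
           (\<forall>l\<ge>1. \<forall>x\<in>carrier G. nested_word G g m l x \<in> F l \<longrightarrow> x = \<one>\<^bsub>G\<^esub>)"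
proof -
  interpret limiting_sequence_group G F k
    using assms(1,2) by (simp add: limiting_sequence_group_def limiting_sequence_group_axioms_def)
  obtain H where H: "translation_bound G F g H"
    using exists_translation_bound[OF assms(3)] by blast
  define m where "m n = k ((H ^^ n) n)" for n
  have "m n \<ge> 1" if "n \<ge> 1" for n
    using k_pos translation_bound_le_funpow[OF H, of n n] that by (simp add: m_def)
  moreover have "x = \<one>\<^bsub>G\<^esub>" if "1 \<le> l" "x \<in> carrier G" "nested_word G g m l x \<in> F l" for l x
  proof -
    obtain j where l: "l = Suc j" using \<open>1 \<le> l\<close> by (cases l) auto
    have "g l \<otimes>\<^bsub>G\<^esub> x [^]\<^bsub>G\<^esub> m l \<in> F ((H ^^ j) l)"
      using nested_apply_level[OF H assms(3), of j l] that assms(3) l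
      by (simp add: nested_word_def m_def[abs_def])
    moreover have "l \<le> (H ^^ j) l"
      by (rule translation_bound_le_funpow[OF H])
    ultimately have "x [^]\<^bsub>G\<^esub> m l \<in> F ((H ^^ l) l)"
      using translation_bound_peel[OF H, of l "(H ^^ j) l" "x [^]\<^bsub>G\<^esub> m l"] that assms(3) l
      by simp
    moreover have "1 \<le> (H ^^ l) l"
      using translation_bound_le_funpow[OF H, of l l] that(1) by linarith
    ultimately show ?thesis
      using root_trivial that(2) by (simp add: m_def)
  qed
  ultimately show ?thesis by blast
qed

end
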